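(* Let $F$ be a CNF formula over variables $x_1,\dots,x_n$ with clauses $C_1,\dots,C_m$ of two or three literals each. Let $R$ be the triple set and $H=(V,A)$ the hypergraph constructed from $F$ as described in the context. If $P\subseteq A$ is an acyclic path in $H$ from $\alpha\beta$ to $c_{m+1}\gamma$, then the triple set $\mathrm{triples}(P)=\{pq|o : \{p,q\}\to\{\{p,o\},\{q,o\}\}\in P\}$ is consistent.
   Context: **Triples and trees.** A rooted triple $pq|o$, with $p,q,o$ distinct leaves and unordered in $p,q$, is displayed by a rooted binary tree $T$ (leaf set containing $p,q,o$) if the path from $p$ to $q$ is node-disjoint from the path from $o$ to the root. A triple set is consistent if some rooted binary tree displays all of its triples. **Triples and arcs.** The triple $pq|o$ corresponds to the hyperarc $\mathrm{arc}(pq|o)=\{p,q\}\to\{\{p,o\},\{q,o\}\}$, and conversely; we write $pq$ for the node $\{p,q\}$. **Hypergraph notions.** A hyperarc $u\to\{v,v'\}$ has tail $u$ and heads $\{v,v'\}$. A path from $u_0$ to $u_\ell$ is a sequence of distinct arcs $(a_1,\dots,a_\ell)$ with $\mathrm{t}(a_1)=u_0$, $u_\ell\in\mathrm{h}(a_\ell)$, and $\mathrm{t}(a_{k+1})\in\mathrm{h}(a_k)$ for all $k$. It is acyclic if no $a_k$ has a head equal to $\mathrm{t}(a_{k'})$ with $k'<k$. **Construction.** Use leaves - $x_i^j,\bar x_i^j,y_i^j,\bar y_i^j$ for $i\in[n]$, $j\in[m]$; - $b_i,b'_i$ for $i\in[n+1]$; - $c_j,d_j$ for $j\in[m]$; -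 $c_{m+1}$, and $\alpha,\beta,\gamma$. The triple set $R$ is the union of the following groups. (i) For each $i\in[n]$: - $b_ib'_i|x_i^1$ and $b'_ix_i^1|y_i^1$; - $x_i^jy_i^j|x_i^{j+1}$ and $y_i^jx_i^{j+1}|y_i^{j+1}$ for $1\le j\le m-1$; - $x_i^my_i^m|b_{i+1}$ and $y_i^mb_{i+1}|b'_{i+1}$. (ii) For each $i\in[n]$: - $b_ib'_i|\bar x_i^1$ and $b'_i\bar x_i^1|\bar y_i^1$; - $\bar x_i^j\bar y_i^j|\bar x_i^{j+1}$ and $\bar y_i^j\bar x_i^{j+1}|\bar y_i^{j+1}$ for $1\le j\le m-1$; - $\bar x_i^m\bar y_i^m|b_{i+1}$ and $\bar x_i^mb_{i+1}|b'_{i+1}$. (iii) For each clause $C_j$: - for each positive occurrence of $x_i$ in $C_j$, the triples $c_jd_j|x_i^j$, $c_jx_i^j|y_i^j$, $c_jy_i^j|c_{j+1}$; - for each negative occurrence of $x_i$ in $C_j$, the same triples with $\bar x_i^j,\bar y_i^j$ in place of $x_i^j,y_i^j$; - if $j<m$, the triple $c_jc_{j+1}|d_{j+1}$. (iv) Connecting triples: $\alpha\beta|b_1$, $\beta b_1|b'_1$, $b_{n+1}b'_{n+1}|c_1$, $b'_{n+1}c_1|d_1$, $c_mc_{m+1}|\gamma$. Then $A=\{\mathrm{arc}(t):t\in R\}$, and $V$ is the set of leaf pairs occurring in arcs of $A$. *)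

theory Defs
  imports Main "HOL-Library.Sublist"
begin

datatype 'a tree = Leaf 'a | Node "'a tree" "'a tree"

fun leaves :: "'a tree \<Rightarrow> 'a list" where
  "leaves (Leaf a) = [a]"
| "leaves (Node l r) = leaves l @ leaves r"

text \<open>Positions of nodes are bool lists (path from the root: False = left, True = right);
  addrs T records each leaf label together with its position.\<close>
fun addrs :: "'a tree \<Rightarrow> ('a \<times> bool list) set" where
  "addrs (Leaf a) = {(a, [])}"
| "addrs (Node l r) = {(a, False # w) | a w. (a, w) \<in> addrs l}
                    \<union> {(a, True # w) | a w. (a, w) \<in> addrs r}"

definition addr :: "'a tree \<Rightarrow> 'a \<Rightarrow> bool list" where
  "addr T a = (THE w. (a, w) \<in> addrs T)"

text \<open>Nodes on the tree path between leaves p and q: ancestors of p or q lying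
  at or below their lowest common ancestor.\<close>
definition path_nodes :: "'a tree \<Rightarrow> 'a \<Rightarrow> 'a \<Rightarrow> bool list set" where
  "path_nodes T p q = {w. (prefix w (addr T p) \<or> prefix w (addr T q)) \<and>
      (\<forall>w'. prefix w' (addr T p) \<and> prefix w' (addr T q) \<longrightarrow> prefix w' w)}"

definition root_path :: "'a tree \<Rightarrow> 'a \<Rightarrow> bool list set" where
  "root_path T r = {w. prefix w (addr T r)}"

text \<open>A rooted triple pq|o is represented by (p,q,o) [written (p,q,r) below]; the order of p,q is irrelevant
  for all notions below.\<close>
type_synonym 'a triple = "'a \<times> 'a \<times> 'a"

definition displays :: "'a tree \<Rightarrow> 'a triple \<Rightarrow> bool" where
  "displays T t = (case t of (p, q, r) \<Rightarrow>
      distinct [p, q, r] \<and> {p, q, r} \<subseteq> set (leaves T) \<and>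
      path_nodes T p q \<inter> root_path T r = {})"

definition consistent :: "'a triple set \<Rightarrow> bool" where
  "consistent S = (\<exists>T. distinct (leaves T) \<and> (\<forall>t\<in>S. displays T t))"

type_synonym 'a hyperarc = "'a set \<times> 'a set set"  \<comment> \<open>(tail, heads)\<close>

definition arc :: "'a triple \<Rightarrow> 'a hyperarc" where
  "arc t = (case t of (p, q, r) \<Rightarrow> ({p, q}, {{p, r}, {q, r}}))"

definition triples_of :: "'a hyperarc set \<Rightarrow> 'a triple set" where
  "triples_of P = {(p, q, r). distinct [p, q, r] \<and> arc (p, q, r) \<in> P}"

definition is_path :: "'a hyperarc list \<Rightarrow> 'a set \<Rightarrow> 'a set \<Rightarrow> bool" where
  "is_path P u v \<longleftrightarrow> P \<noteq> [] \<and> distinct P \<and> fst (hd P) = u \<and> v \<in> snd (last P) \<and>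
      (\<forall>k. Suc k < length P \<longrightarrow> fst (P ! Suc k) \<in> snd (P ! k))"

definition acyclic_path :: "'a hyperarc list \<Rightarrow> bool" where
  "acyclic_path P \<longleftrightarrow> (\<forall>k k'. k' < k \<and> k < length P \<longrightarrow> fst (P ! k') \<notin> snd (P ! k))"

datatype leaf = X nat nat | XB nat nat | Y nat nat | YB nat nat
  | B nat | Bp nat | C nat | D nat | Alpha | Beta | Gamma

text \<open>A CNF formula: n variables, m clauses; clause j is a set of literals (i, s),
  s = True for the positive literal x_i, s = False for the negative literal.\<close>

definition R_i :: "nat \<Rightarrow> nat \<Rightarrow> leaf triple set" where
  "R_i n m = (\<Union>i\<in>{1..n}.
     {(B i, Bp i, X i 1), (Bp i, X i 1, Y i 1),
      (X i m, Y i m, B (i+1)), (Y i m, B (i+1), Bp (i+1))}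
     \<union> (\<Union>j\<in>{1..m-1}. {(X i j, Y i j, X i (j+1)), (Y i j, X i (j+1), Y i (j+1))}))"

definition R_ii :: "nat \<Rightarrow> nat \<Rightarrow> leaf triple set" where
  "R_ii n m = (\<Union>i\<in>{1..n}.
     {(B i, Bp i, XB i 1), (Bp i, XB i 1, YB i 1),
      (XB i m, YB i m, B (i+1)), (XB i m, B (i+1), Bp (i+1))}
     \<union> (\<Union>j\<in>{1..m-1}. {(XB i j, YB i j, XB i (j+1)), (YB i j, XB i (j+1), YB i (j+1))}))"

definition R_iii :: "nat \<Rightarrow> nat \<Rightarrow> (nat \<Rightarrow> (nat \<times> bool) set) \<Rightarrow> leaf triple set" where
  "R_iii n m cls = (\<Union>j\<in>{1..m}.
     (\<Union>i\<in>{1..n}.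
        (if (i, True) \<in> cls j then {(C j, D j, X i j), (C j, X i j, Y i j), (C j, Y i j, C (j+1))} else {})
      \<union> (if (i, False) \<in> cls j then {(C j, D j, XB i j), (C j, XB i j, YB i j), (C j, YB i j, C (j+1))} else {}))
     \<union> (if j < m then {(C j, C (j+1), D (j+1))} else {}))"

definition R_iv :: "nat \<Rightarrow> nat \<Rightarrow> leaf triple set" where
  "R_iv n m = {(Alpha, Beta, B 1), (Beta, B 1, Bp 1), (B (n+1), Bp (n+1), C 1),
               (Bp (n+1), C 1, D 1), (C m, C (m+1), Gamma)}"

definition triple_set :: "nat \<Rightarrow> nat \<Rightarrow> (nat \<Rightarrow> (nat \<times> bool) set) \<Rightarrow> leaf triple set" where
  "triple_set n m cls = R_i n m \<union> R_ii n m \<union> R_iii n m cls \<union> R_iv n m"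

definition arcs :: "nat \<Rightarrow> nat \<Rightarrow> (nat \<Rightarrow> (nat \<times> bool) set) \<Rightarrow> leaf hyperarc set" where
  "arcs n m cls = arc ` triple_set n m cls"

definition hnodes :: "nat \<Rightarrow> nat \<Rightarrow> (nat \<Rightarrow> (nat \<times> bool) set) \<Rightarrow> leaf set set" where
  "hnodes n m cls = (\<Union>a\<in>arcs n m cls. insert (fst a) (snd a))"

end

theory Submission
  imports Defs
begin

text \<open>Rank every leaf by the first position along P at which it occurs in the tail of an arc.
  If the outgroup o of each arc pq|o of P has strictly larger rank than p and q, the caterpillar
  listing the leaves by decreasing rank displays every triple of P. The outgroup of the k-th arc
  indeed never occurs in the tails of arcs 0..k: the tails along P strictly increase for a
  potential that weighs leaves along the variable chain
  \<alpha>\<beta>, b_1 b'_1, x_1^1 y_1^1, \<dots> and, after the unique entry node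
  b_{n+1} b'_{n+1}, along the clause chain c_1 d_1, \<dots>; an earlier
  occurrence of o would place a tail of larger potential before pq. The exceptions are the clause
  triples c_j d_j|x_i^j and c_j x_i^j|y_i^j, whose arc leads into the node
  x_i^j y_i^j; there acyclicity of P excludes the earlier occurrence.\<close>

section \<open>Caterpillars and consistency\<close>

fun caterpillar :: "'a list \<Rightarrow> 'a tree" where
  "caterpillar [] = Leaf undefined"
| "caterpillar [x] = Leaf x"
| "caterpillar (x # y # ys) = Node (Leaf x) (caterpillar (y # ys))"

lemma leaves_caterpillar: "xs \<noteq> [] \<Longrightarrow> leaves (caterpillar xs) = xs"
  by (induction xs rule: caterpillar.induct) auto

lemma addrs_imp_leaf: "(a, w) \<in> addrs T \<Longrightarrow> a \<in> set (leaves T)"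
  by (induction T arbitrary: w) auto

lemma leaf_imp_addrs: "a \<in> set (leaves T) \<Longrightarrow> \<exists>w. (a, w) \<in> addrs T"
  by (induction T) auto

lemma addrs_unique:
  "distinct (leaves T) \<Longrightarrow> (a, w) \<in> addrs T \<Longrightarrow> (a, w') \<in> addrs T \<Longrightarrow> w = w'"
proof (induction T arbitrary: w w')
  case (Node l r)
  then show ?case
    by simp (metis addrs_imp_leaf disjoint_iff)
qed simp

lemma addr_eqI: "distinct (leaves T) \<Longrightarrow> (a, w) \<in> addrs T \<Longrightarrow> addr T a = w"
  unfolding addr_def by (blast intro: addrs_unique)

lemma addr_Node_left:
  assumes "distinct (leaves (Node l r))" "a \<in> set (leaves l)"
  shows "addr (Node l r) a = False # addr l a"
proof -
  obtain w where w: "(a, w) \<in> addrs l" using leaf_imp_addrs[OF assms(2)] ..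
  have "addr l a = w" using assms(1) w by (simp add: addr_eqI)
  moreover have "addr (Node l r) a = False # w" using assms(1) w by (simp add: addr_eqI)
  ultimately show ?thesis by simp
qed

lemma addr_Node_right:
  assumes "distinct (leaves (Node l r))" "a \<in> set (leaves r)"
  shows "addr (Node l r) a = True # addr r a"
proof -
  obtain w where w: "(a, w) \<in> addrs r" using leaf_imp_addrs[OF assms(2)] ..
  have "addr r a = w" using assms(1) w by (simp add: addr_eqI)
  moreover have "addr (Node l r) a = True # w" using assms(1) w by (simp add: addr_eqI)
  ultimately show ?thesis by simp
qed

definition path_between :: "bool list \<Rightarrow> bool list \<Rightarrow> bool list set" where
  "path_between u v = {w. (prefix w u \<or> prefix w v) \<and>
     (\<forall>w'. prefix w' u \<and> prefix w' v \<longrightarrow> prefix w' w)}"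

lemma displays_iff_path_between:
  "displays T (p, q, r) \<longleftrightarrow> distinct [p, q, r] \<and> {p, q, r} \<subseteq> set (leaves T) \<and>
     path_between (addr T p) (addr T q) \<inter> {w. prefix w (addr T r)} = {}"
  unfolding displays_def path_nodes_def root_path_def path_between_def by simp

lemma path_between_Cons_disjoint:
  assumes "path_between u v \<inter> {w. prefix w z} = {}"
  shows "path_between (b # u) (b # v) \<inter> {w. prefix w (b # z)} = {}"
proof (rule ccontr)
  assume "path_between (b # u) (b # v) \<inter> {w. prefix w (b # z)} \<noteq> {}"
  then obtain w where w: "w \<in> path_between (b # u) (b # v)" "prefix w (b # z)" by auto
  have "prefix [b] w" using w(1) unfolding path_between_def by auto
  then obtain w' where w': "w = b # w'" by (cases w) auto
  have "w' \<in> path_between u v"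
    using w(1) unfolding path_between_def w' by (auto dest: spec[of _ "b # _"])
  moreover have "prefix w' z" using w(2) w' by auto
  ultimately show False using assms by auto
qed

lemma path_between_True_disjoint_False:
  "path_between (True # u) (True # v) \<inter> {w. prefix w [False]} = {}"
  unfolding path_between_def by (auto dest: spec[of _ "[True]"] simp: prefix_Cons)

lemma caterpillar_displays:
  fixes f :: "'a \<Rightarrow> nat"
  assumes "distinct L" "sorted_wrt (\<lambda>a b. f b \<le> f a) L" "{p, q, r} \<subseteq> set L"
    "distinct [p, q, r]" "f p < f r" "f q < f r"
  shows "displays (caterpillar L) (p, q, r)"
  using assms
proof (induction L rule: caterpillar.induct)
  case (3 x y ys)
  let ?T = "caterpillar (y # ys)"
  have d: "distinct (leaves (Node (Leaf x) ?T))" using "3.prems"(1) by (simp add: leaves_caterpillar)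
  have "p \<noteq> x" "q \<noteq> x" using "3.prems" by auto
  then have pq: "p \<in> set (y # ys)" "q \<in> set (y # ys)" using "3.prems"(3) by auto
  then have addr_pq:
      "addr (Node (Leaf x) ?T) p = True # addr ?T p" "addr (Node (Leaf x) ?T) q = True # addr ?T q"
    using d by (simp_all add: addr_Node_right leaves_caterpillar del: leaves.simps)
  show ?case
  proof (cases "r = x")
    case True
    then have "addr (Node (Leaf x) ?T) r = [False]" using d by (simp add: addr_Node_left addr_eqI)
    then show ?thesis
      using "3.prems" addr_pq path_between_True_disjoint_False
      by (simp add: displays_iff_path_between leaves_caterpillar)
  next
    case False
    then have r: "r \<in> set (y # ys)" using "3.prems"(3) by auto
    then have "addr (Node (Leaf x) ?T) r = True # addr ?T r"
      using d by (simp add: addr_Node_right leaves_caterpillar del: leaves.simps)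
    moreover have "displays ?T (p, q, r)" using "3" pq r by simp
    ultimately show ?thesis
      using addr_pq path_between_Cons_disjoint by (simp add: displays_iff_path_between leaves_caterpillar)
  qed
qed auto

lemma consistent_of_rank:
  fixes f :: "'a \<Rightarrow> nat"
  assumes "finite U"
    and "\<And>p q r. (p, q, r) \<in> S \<Longrightarrow> distinct [p, q, r] \<and> {p, q, r} \<subseteq> U \<and> f p < f r \<and> f q < f r"
  shows "consistent S"
proof -
  obtain xs where xs: "set xs = U" "distinct xs" using finite_distinct_list[OF assms(1)] by blast
  define L where "L = rev (sort_key f xs)"
  have "sorted_wrt (\<lambda>a b. f a \<le> f b) (sort_key f xs)"
    using sorted_sort_key[of f xs] by (simp only: sorted_map)
  then have L: "set L = U" "distinct L" "sorted_wrt (\<lambda>a b. f b \<le> f a) L"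
    using xs by (simp_all add: L_def sorted_wrt_rev)
  show ?thesis
  proof (cases "L = []")
    case True
    then have "S = {}" using assms(2) L(1) by fastforce
    then show ?thesis unfolding consistent_def by (auto intro: exI[of _ "Leaf undefined"])
  next
    case False
    show ?thesis unfolding consistent_def
    proof (intro exI[of _ "caterpillar L"] conjI ballI)
      show "distinct (leaves (caterpillar L))" using False L by (simp add: leaves_caterpillar)
      fix t assume "t \<in> S"
      then show "displays (caterpillar L) t"
        using assms(2) caterpillar_displays[OF L(2,3)] L(1) by (cases t) simp
    qed
  qed
qed

lemma arc_tail_notin_heads: "distinct [p, q, r] \<Longrightarrow> fst (arc (p, q, r)) \<notin> snd (arc (p, q, r))"
  unfolding arc_def by (auto simp: doubleton_eq_iff)

lemma arc_eq_imp_outgroup_eq: "distinct [p, q, r] \<Longrightarrow> arc (p, q, r) = arc (p', q', r') \<Longrightarrow> r = r'"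
  unfolding arc_def by (auto simp: doubleton_eq_iff)

lemma fresh_outgroups_imp_consistent:
  assumes "set P \<subseteq> range arc"
    and fresh: "\<And>k p q r k'. k < length P \<Longrightarrow> P ! k = arc (p, q, r) \<Longrightarrow> distinct [p, q, r] \<Longrightarrow>
      k' \<le> k \<Longrightarrow> r \<notin> fst (P ! k')"
  shows "consistent (triples_of (set P))"
proof -
  define f where "f v = (LEAST k. k = length P \<or> v \<in> fst (P ! k))" for v
  define U where "U = (\<Union>a\<in>set P. fst a \<union> \<Union>(snd a))"
  have "finite U" using assms(1) unfolding U_def by (auto simp: arc_def)
  then show ?thesis
  proof (rule consistent_of_rank[of _ _ f])
    fix p q r assume "(p, q, r) \<in> triples_of (set P)"
    then have d: "distinct [p, q, r]" and a: "arc (p, q, r) \<in> set P" by (simp_all add: triples_of_def)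
    then obtain k where k: "k < length P" "P ! k = arc (p, q, r)" by (auto simp: in_set_conv_nth)
    then have "f p \<le> k" "f q \<le> k" unfolding f_def by (auto intro!: Least_le simp: arc_def)
    moreover have "k < f r"
    proof (rule ccontr)
      assume "\<not> k < f r"
      have "f r = length P \<or> r \<in> fst (P ! f r)" unfolding f_def by (rule LeastI[of _ "length P"]) simp
      then show False using fresh[OF k d] \<open>\<not> k < f r\<close> k(1) by auto
    qed
    moreover have "{p, q, r} \<subseteq> U"
      using a unfolding U_def by (auto intro!: bexI[of _ "arc (p, q, r)"] simp: arc_def)
    ultimately show "distinct [p, q, r] \<and> {p, q, r} \<subseteq> U \<and> f p < f r \<and> f q < f r" using d by simp
  qed
qed

section \<open>Local structure of the hypergraph\<close>

type_synonym clauses = "nat \<Rightarrow> (nat \<times> bool) set"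

lemma triple_set_cases[consumes 1]:
  assumes "t \<in> triple_set n m cls"
  obtains "t = (Alpha, Beta, B 1)"
  | "t = (Beta, B 1, Bp 1)"
  | "t = (B (n+1), Bp (n+1), C 1)"
  | "t = (Bp (n+1), C 1, D 1)"
  | "t = (C m, C (m+1), Gamma)"
  | i where "1 \<le> i" "i \<le> n" "t = (B i, Bp i, X i 1)"
  | i where "1 \<le> i" "i \<le> n" "t = (Bp i, X i 1, Y i 1)"
  | i where "1 \<le> i" "i \<le> n" "t = (X i m, Y i m, B (i+1))"
  | i where "1 \<le> i" "i \<le> n" "t = (Y i m, B (i+1), Bp (i+1))"
  | i j where "1 \<le> i" "i \<le> n" "1 \<le> j" "j < m" "t = (X i j, Y i j, X i (j+1))"
  | i j where "1 \<le> i" "i \<le> n" "1 \<le> j" "j < m" "t = (Y i j, X i (j+1), Y i (j+1))"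
  | i where "1 \<le> i" "i \<le> n" "t = (B i, Bp i, XB i 1)"
  | i where "1 \<le> i" "i \<le> n" "t = (Bp i, XB i 1, YB i 1)"
  | i where "1 \<le> i" "i \<le> n" "t = (XB i m, YB i m, B (i+1))"
  | i where "1 \<le> i" "i \<le> n" "t = (XB i m, B (i+1), Bp (i+1))"
  | i j where "1 \<le> i" "i \<le> n" "1 \<le> j" "j < m" "t = (XB i j, YB i j, XB i (j+1))"
  | i j where "1 \<le> i" "i \<le> n" "1 \<le> j" "j < m" "t = (YB i j, XB i (j+1), YB i (j+1))"
  | i j where "1 \<le> i" "i \<le> n" "1 \<le> j" "j \<le> m" "(i, True) \<in> cls j" "t = (C j, D j, X i j)"
  | i j where "1 \<le> i" "i \<le> n" "1 \<le> j" "j \<le> m" "(i, True) \<in> cls j" "t = (C j, X i j, Y i j)"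
  | i j where "1 \<le> i" "i \<le> n" "1 \<le> j" "j \<le> m" "(i, True) \<in> cls j" "t = (C j, Y i j, C (j+1))"
  | i j where "1 \<le> i" "i \<le> n" "1 \<le> j" "j \<le> m" "(i, False) \<in> cls j" "t = (C j, D j, XB i j)"
  | i j where "1 \<le> i" "i \<le> n" "1 \<le> j" "j \<le> m" "(i, False) \<in> cls j" "t = (C j, XB i j, YB i j)"
  | i j where "1 \<le> i" "i \<le> n" "1 \<le> j" "j \<le> m" "(i, False) \<in> cls j" "t = (C j, YB i j, C (j+1))"
  | j where "1 \<le> j" "j < m" "t = (C j, C (j+1), D (j+1))"
  using assms unfolding triple_set_def R_i_def R_ii_def R_iii_def R_iv_def
  apply atomize_elim
  apply (elim UnE UN_E insertE emptyE)
  apply (simp_all split: if_splits)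
  apply (elim disjE conjE; simp)+
  done

definition clause_phase :: "nat \<Rightarrow> leaf set \<Rightarrow> bool" where
  "clause_phase n S \<longleftrightarrow> (\<exists>j. C j \<in> S) \<or> S = {B (n+1), Bp (n+1)}"

text \<open>The weights number the leaves along the variable chain
  \<alpha>, \<beta>, b_1, b'_1, x_1^1, y_1^1, \<dots>, x_1^m, y_1^m, b_2, \<dots>
  and along the clause chain b_{n+1}, b'_{n+1}, c_1, d_1, x_i^1, y_i^1, c_2, \<dots>,
  so that following an arc within a phase increases the potential of the tail.\<close>

fun variable_weight :: "nat \<Rightarrow> leaf \<Rightarrow> nat" where
  "variable_weight m Alpha = 0"
| "variable_weight m Beta = 1"
| "variable_weight m (B i) = (2*m+2)*i"
| "variable_weight m (Bp i) = (2*m+2)*i + 1"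
| "variable_weight m (X i j) = (2*m+2)*i + 2*j"
| "variable_weight m (XB i j) = (2*m+2)*i + 2*j"
| "variable_weight m (Y i j) = (2*m+2)*i + 2*j + 1"
| "variable_weight m (YB i j) = (2*m+2)*i + 2*j + 1"
| "variable_weight m _ = 0"

fun clause_weight :: "leaf \<Rightarrow> nat" where
  "clause_weight (B i) = 0"
| "clause_weight (Bp i) = 1"
| "clause_weight (C j) = 4*j"
| "clause_weight (D j) = 4*j + 1"
| "clause_weight (X i j) = 4*j + 2"
| "clause_weight (XB i j) = 4*j + 2"
| "clause_weight (Y i j) = 4*j + 3"
| "clause_weight (YB i j) = 4*j + 3"
| "clause_weight _ = 0"

definition potential :: "nat \<Rightarrow> nat \<Rightarrow> leaf set \<Rightarrow> nat" where
  "potential n m S = (if clause_phase n S then sum clause_weight S else sum (variable_weight m) S)"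

definition potential_less :: "nat \<Rightarrow> nat \<Rightarrow> leaf set \<Rightarrow> leaf set \<Rightarrow> bool" where
  "potential_less n m S S' \<longleftrightarrow> (\<not> clause_phase n S \<and> clause_phase n S') \<or>
     (clause_phase n S = clause_phase n S' \<and> potential n m S < potential n m S')"

lemma potential_less_trans:
  "potential_less n m S S' \<Longrightarrow> potential_less n m S' S'' \<Longrightarrow> potential_less n m S S''"
  unfolding potential_less_def by auto

lemma potential_less_asym: "potential_less n m S S' \<Longrightarrow> \<not> potential_less n m S' S"
  unfolding potential_less_def by auto

definition arc_step :: "nat \<Rightarrow> nat \<Rightarrow> clauses \<Rightarrow> leaf set \<Rightarrow> leaf set \<Rightarrow> bool" where
  "arc_step n m cls S S' \<longleftrightarrow> (\<exists>t\<in>triple_set n m cls. \<exists>t'\<in>triple_set n m cls.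
     S = fst (arc t) \<and> S' = fst (arc t') \<and> S' \<in> snd (arc t))"

lemmas arc_simps = arc_def doubleton_eq_iff clause_phase_def potential_less_def potential_def

lemma arc_step_potential_less:
  assumes "arc_step n m cls S S'"
  shows "potential_less n m S S' \<or> (clause_phase n S \<and> \<not> clause_phase n S')"
  using assms unfolding arc_step_def
  by (elim bexE conjE triple_set_cases) (auto simp: arc_simps)

lemma arc_step_enters_clause_phase:
  assumes "arc_step n m cls S S'" "\<not> clause_phase n S" "clause_phase n S'"
  shows "S' = {B (n+1), Bp (n+1)}"
  using assms unfolding arc_step_def
  by (elim bexE conjE triple_set_cases) (auto simp: arc_simps)

lemma triple_set_distinct: "(p, q, r) \<in> triple_set n m cls \<Longrightarrow> distinct [p, q, r]"
  by (erule triple_set_cases) auto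

lemma clause_phase_tail_of_final_arc:
  "t \<in> triple_set n m cls \<Longrightarrow> {C (m+1), Gamma} \<in> snd (arc t) \<Longrightarrow> clause_phase n (fst (arc t))"
  by (erule triple_set_cases) (auto simp: arc_simps)

definition only_successor :: "nat \<Rightarrow> nat \<Rightarrow> clauses \<Rightarrow> leaf set \<Rightarrow> leaf set \<Rightarrow> bool" where
  "only_successor n m cls S Z \<longleftrightarrow> (\<forall>S'. arc_step n m cls S S' \<longrightarrow> S' = Z)"

definition only_predecessor :: "nat \<Rightarrow> nat \<Rightarrow> clauses \<Rightarrow> leaf set \<Rightarrow> leaf set \<Rightarrow> bool" where
  "only_predecessor n m cls S Z \<longleftrightarrow>
     (\<forall>t\<in>triple_set n m cls. S \<in> snd (arc t) \<longrightarrow> fst (arc t) = Z)"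

fun gadget_node :: "leaf \<Rightarrow> leaf set" where
  "gadget_node (X i j) = {X i j, Y i j}"
| "gadget_node (Y i j) = {X i j, Y i j}"
| "gadget_node (XB i j) = {XB i j, YB i j}"
| "gadget_node (YB i j) = {XB i j, YB i j}"
| "gadget_node _ = {}"

text \<open>The triples c_j d_j|x_i^j and c_j x_i^j|y_i^j (and their negated
  versions): the only triples whose outgroup can occur in a tail of smaller potential.\<close>

definition enters_gadget :: "leaf triple \<Rightarrow> bool" where
  "enters_gadget t \<longleftrightarrow> (case t of (p, q, r) \<Rightarrow> (\<exists>j. p = C j) \<and> gadget_node r \<noteq> {})"

lemma only_successor_X1:
  "only_successor n m cls {Bp i, X i (Suc 0)} {X i (Suc 0), Y i (Suc 0)}"
  unfolding only_successor_def arc_step_def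
  by (intro allI impI, elim bexE conjE,
      (erule triple_set_cases; erule triple_set_cases); auto simp: arc_simps)

lemma only_successor_X2:
  "only_successor n m cls {Y i j, X i (Suc j)} {X i (Suc j), Y i (Suc j)}"
  unfolding only_successor_def arc_step_def
  by (intro allI impI, elim bexE conjE,
      (erule triple_set_cases; erule triple_set_cases); auto simp: arc_simps)

lemma only_successor_XB1:
  "only_successor n m cls {Bp i, XB i (Suc 0)} {XB i (Suc 0), YB i (Suc 0)}"
  unfolding only_successor_def arc_step_def
  by (intro allI impI, elim bexE conjE,
      (erule triple_set_cases; erule triple_set_cases); auto simp: arc_simps)

lemma only_successor_XB2:
  "only_successor n m cls {YB i j, XB i (Suc j)} {XB i (Suc j), YB i (Suc j)}"
  unfolding only_successor_def arc_step_def
  by (intro allI impI, elim bexE conjE,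
      (erule triple_set_cases; erule triple_set_cases); auto simp: arc_simps)

lemma only_predecessor_X1:
  "only_predecessor n m cls {Y i j, X i (Suc j)} {X i j, Y i j}"
  unfolding only_predecessor_def
  by (intro ballI impI, erule triple_set_cases; auto simp: arc_simps)

lemma only_predecessor_X2:
  "only_predecessor n m cls {Y i m, B (Suc i)} {X i m, Y i m}"
  unfolding only_predecessor_def
  by (intro ballI impI, erule triple_set_cases; auto simp: arc_simps)

lemma only_predecessor_XB1:
  "only_predecessor n m cls {YB i j, XB i (Suc j)} {XB i j, YB i j}"
  unfolding only_predecessor_def
  by (intro ballI impI, erule triple_set_cases; auto simp: arc_simps)

lemma only_predecessor_XB2:
  "only_predecessor n m cls {XB i m, B (Suc i)} {XB i m, YB i m}"
  unfolding only_predecessor_def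
  by (intro ballI impI, erule triple_set_cases; auto simp: arc_simps)

lemmas gadget_neighbours =
  only_successor_X1 only_successor_X2 only_successor_XB1 only_successor_XB2
  only_predecessor_X1 only_predecessor_X2 only_predecessor_XB1 only_predecessor_XB2

lemma outgroup_in_tail_cases:
  assumes "(p, q, r) \<in> triple_set n m cls" "t' \<in> triple_set n m cls" "r \<in> fst (arc t')"
  shows "potential_less n m {p, q} (fst (arc t')) \<or>
    (enters_gadget (p, q, r) \<and> (fst (arc t') = gadget_node r \<or>
       only_successor n m cls (fst (arc t')) (gadget_node r) \<or>
       only_predecessor n m cls (fst (arc t')) (gadget_node r)))"
  using assms
  by (elim triple_set_cases)
    (simp_all add: arc_simps enters_gadget_def gadget_neighbours, auto simp: eq_commute[of "Suc 0"])

lemma enters_gadget_reaches_node: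
  assumes "(p, q, r) \<in> triple_set n m cls" "enters_gadget (p, q, r)"
  shows "(gadget_node r \<in> snd (arc (p, q, r)) \<and> gadget_node r \<noteq> {p, q}) \<or>
    ({C (m+1), Gamma} \<notin> snd (arc (p, q, r)) \<and>
     (\<forall>t'\<in>triple_set n m cls.
        fst (arc t') \<in> snd (arc (p, q, r)) \<longrightarrow> gadget_node r \<in> snd (arc t')))"
  using assms
  by (elim triple_set_cases)
    (simp_all add: arc_simps enters_gadget_def,
      (intro ballI impI; elim triple_set_cases; simp add: arc_simps)+)

section \<open>Acyclic paths from \<alpha>\<beta> to c_{m+1}\<gamma>\<close>

lemma nat_rising_edge:
  assumes "\<not> Q i" "Q j" "i \<le> j"
  shows "\<exists>k. i \<le> k \<and> k < j \<and> \<not> Q k \<and> Q (Suc k)"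
  using assms(3,2)
proof (induction rule: dec_induct)
  case base then show ?case using assms(1) by simp
next
  case (step j) then show ?case by (cases "Q j") (auto intro: less_SucI)
qed

locale reduction_path =
  fixes n m :: nat and cls :: clauses and P :: "leaf hyperarc list"
  assumes arcs_P: "set P \<subseteq> arcs n m cls"
    and path_P: "is_path P {Alpha, Beta} {C (m+1), Gamma}"
    and acyclic_P: "acyclic_path P"
begin

abbreviation tail :: "nat \<Rightarrow> leaf set" where "tail k \<equiv> fst (P ! k)"
abbreviation heads :: "nat \<Rightarrow> leaf set set" where "heads k \<equiv> snd (P ! k)"

lemma triple_at:
  assumes "k < length P"
  obtains p q r where "(p, q, r) \<in> triple_set n m cls" "P ! k = arc (p, q, r)"
  using arcs_P nth_mem[OF assms] unfolding arcs_def by auto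

lemma tail_0: "tail 0 = {Alpha, Beta}"
  using path_P unfolding is_path_def by (metis hd_conv_nth)

lemma final_head: "{C (m+1), Gamma} \<in> heads (length P - 1)"
  using path_P unfolding is_path_def by (metis last_conv_nth)

lemma tail_Suc_in_heads: "Suc k < length P \<Longrightarrow> tail (Suc k) \<in> heads k"
  using path_P unfolding is_path_def by blast

lemma tail_notin_heads:
  assumes "k' \<le> k" "k < length P"
  shows "tail k' \<notin> heads k"
proof (cases "k' = k")
  case True
  obtain p q r where "(p, q, r) \<in> triple_set n m cls" "P ! k = arc (p, q, r)"
    using triple_at[OF assms(2)] .
  then show ?thesis using True arc_tail_notin_heads[OF triple_set_distinct] by simp
next
  case False
  then show ?thesis using acyclic_P assms unfolding acyclic_path_def by simp
qed

lemma tails_distinct: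
  assumes "k' < k" "k < length P"
  shows "tail k' \<noteq> tail k"
proof -
  obtain k0 where k: "k = Suc k0" using assms(1) less_imp_Suc_add by blast
  then have "tail k \<in> heads k0" using tail_Suc_in_heads assms(2) by simp
  moreover have "tail k' \<notin> heads k0" using tail_notin_heads assms k by simp
  ultimately show ?thesis by auto
qed

lemma arc_step_at:
  assumes "Suc k < length P"
  shows "arc_step n m cls (tail k) (tail (Suc k))"
proof -
  have "k < length P" using assms by simp
  then obtain p q r where t: "(p, q, r) \<in> triple_set n m cls" "P ! k = arc (p, q, r)"
    by (rule triple_at)
  obtain p' q' r' where t': "(p', q', r') \<in> triple_set n m cls" "P ! Suc k = arc (p', q', r')"
    using assms by (rule triple_at)
  have "tail k = fst (arc (p, q, r))" "tail (Suc k) = fst (arc (p', q', r'))"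
    "tail (Suc k) \<in> snd (arc (p, q, r))"
    using t(2) t'(2) tail_Suc_in_heads[OF assms] by simp_all
  then show ?thesis unfolding arc_step_def using t(1) t'(1) by blast
qed

lemma clause_phase_final: "clause_phase n (tail (length P - 1))"
proof -
  have "length P - 1 < length P" using path_P unfolding is_path_def by simp
  then obtain p q r where "(p, q, r) \<in> triple_set n m cls" "P ! (length P - 1) = arc (p, q, r)"
    by (rule triple_at)
  then show ?thesis using final_head clause_phase_tail_of_final_arc by simp
qed

lemma clause_phase_persists:
  assumes "Suc k < length P" "clause_phase n (tail k)"
  shows "clause_phase n (tail (Suc k))"
proof (rule ccontr)
  txt \<open>Leaving the clause phase would force the path to enter it twice, both times through
    the node b_{n+1} b'_{n+1}.\<close>
  assume "\<not> clause_phase n (tail (Suc k))"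
  have "\<not> clause_phase n (tail 0)" using tail_0 unfolding clause_phase_def by (auto simp: doubleton_eq_iff)
  then obtain k1 where k1: "k1 < k" "\<not> clause_phase n (tail k1)" "clause_phase n (tail (Suc k1))"
    using nat_rising_edge[of "\<lambda>k. clause_phase n (tail k)" 0 k] assms(2) by auto
  have "Suc k \<le> length P - 1" using assms(1) by simp
  then obtain k2 where k2: "Suc k \<le> k2" "k2 < length P - 1"
      "\<not> clause_phase n (tail k2)" "clause_phase n (tail (Suc k2))"
    using nat_rising_edge[of "\<lambda>k. clause_phase n (tail k)" "Suc k" "length P - 1"]
      \<open>\<not> clause_phase n (tail (Suc k))\<close> clause_phase_final by blast
  have "Suc k1 < length P" "Suc k2 < length P" using k1(1) k2(2) assms(1) by simp_all
  then have "tail (Suc k1) = {B (n+1), Bp (n+1)}" "tail (Suc k2) = {B (n+1), Bp (n+1)}"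
    using arc_step_enters_clause_phase[OF arc_step_at] k1(2,3) k2(3,4) by blast+
  then show False using tails_distinct[of "Suc k1" "Suc k2"] k1(1) k2(1) \<open>Suc k2 < length P\<close> by simp
qed

lemma potential_less_tails:
  assumes "k' < k" "k < length P"
  shows "potential_less n m (tail k') (tail k)"
  using assms
proof (induction k)
  case (Suc k)
  have "potential_less n m (tail k) (tail (Suc k))"
    using arc_step_potential_less[OF arc_step_at] clause_phase_persists Suc.prems(2) by blast
  then show ?case using Suc potential_less_trans by (cases "k' = k") auto
qed simp

lemma gadget_node_not_tail:
  assumes "k < length P" "P ! k = arc (p, q, r)" "(p, q, r) \<in> triple_set n m cls"
    "enters_gadget (p, q, r)" "k' \<le> k"
  shows "tail k' \<noteq> gadget_node r"
  \<comment> \<open>The gadget node is a head of arc k or of arc k+1, so acyclicity excludes it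
    as an earlier tail.\<close>
  using enters_gadget_reaches_node[OF assms(3,4)]
proof (elim disjE conjE)
  assume "gadget_node r \<in> snd (arc (p, q, r))" "gadget_node r \<noteq> {p, q}"
  then show ?thesis
  proof (cases "k' = k")
    case False
    then show ?thesis
      using assms(1,2,5) tail_notin_heads[of k' k] \<open>gadget_node r \<in> snd (arc (p, q, r))\<close> by auto
  qed (use assms(2) in \<open>simp add: arc_def\<close>)
next
  assume "{C (m+1), Gamma} \<notin> snd (arc (p, q, r))" and
    next_arcs: "\<forall>t'\<in>triple_set n m cls.
      fst (arc t') \<in> snd (arc (p, q, r)) \<longrightarrow> gadget_node r \<in> snd (arc t')"
  then have "k \<noteq> length P - 1" using final_head assms(2) by auto
  then have k: "Suc k < length P" using assms(1) by simp
  then obtain p' q' r' where "(p', q', r') \<in> triple_set n m cls" "P ! Suc k = arc (p', q', r')"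
    by (rule triple_at)
  then have "gadget_node r \<in> heads (Suc k)"
    using next_arcs tail_Suc_in_heads[OF k] assms(2) by simp
  then show ?thesis using tail_notin_heads[OF _ k, of k'] assms(5) by auto
qed

lemma outgroup_not_in_earlier_tail:
  assumes "k < length P" "P ! k = arc (p, q, r)" "(p, q, r) \<in> triple_set n m cls" "k' \<le> k"
  shows "r \<notin> tail k'"
proof
  assume r: "r \<in> tail k'"
  have tail_k: "tail k = {p, q}" using assms(2) by (simp add: arc_def)
  then have "k' < k" using r assms(4) triple_set_distinct[OF assms(3)] by (cases "k' = k") auto
  have "k' < length P" using \<open>k' < k\<close> assms(1) by simp
  then obtain p' q' r' where t': "(p', q', r') \<in> triple_set n m cls" "P ! k' = arc (p', q', r')"
    by (rule triple_at)
  show False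
  proof (cases "potential_less n m {p, q} (tail k')")
    case True
    then show False using potential_less_tails[OF \<open>k' < k\<close> assms(1)] potential_less_asym tail_k by metis
  next
    case False
    then have gadget: "enters_gadget (p, q, r)" and
      "tail k' = gadget_node r \<or> only_successor n m cls (tail k') (gadget_node r) \<or>
         only_predecessor n m cls (tail k') (gadget_node r)"
      using outgroup_in_tail_cases[OF assms(3) t'(1)] r t'(2) by auto
    moreover have not_tail: "tail k'' \<noteq> gadget_node r" if "k'' \<le> k" for k''
      using gadget_node_not_tail[OF assms(1-3) gadget that] .
    ultimately show False
    proof (elim disjE)
      assume "only_successor n m cls (tail k') (gadget_node r)"
      moreover have "Suc k' < length P" using \<open>k' < k\<close> assms(1) by simp
      ultimately have "tail (Suc k') = gadget_node r"
        using arc_step_at unfolding only_successor_def by blast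
      then show False using not_tail \<open>k' < k\<close> by simp
    next
      assume pred: "only_predecessor n m cls (tail k') (gadget_node r)"
      have "gadget_node r \<noteq> {}" using gadget by (simp add: enters_gadget_def)
      then have "r \<notin> {Alpha, Beta}" by auto
      then have "k' \<noteq> 0" using r tail_0 by (metis)
      then obtain k0 where k0: "k' = Suc k0" using not0_implies_Suc by blast
      have "Suc k0 < length P" using k0 \<open>k' < k\<close> assms(1) by simp
      then have "k0 < length P" by simp
      then obtain p0 q0 r0 where t0: "(p0, q0, r0) \<in> triple_set n m cls" "P ! k0 = arc (p0, q0, r0)"
        by (rule triple_at)
      have "tail k' \<in> snd (arc (p0, q0, r0))"
        using tail_Suc_in_heads[OF \<open>Suc k0 < length P\<close>] k0 t0(2) by simp
      then have "tail k0 = gadget_node r"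
        using pred t0 unfolding only_predecessor_def by simp
      then show False using not_tail k0 \<open>k' < k\<close> by simp
    qed (use not_tail assms(4) in simp)
  qed
qed

lemma consistent_triples_of_path: "consistent (triples_of (set P))"
proof (rule fresh_outgroups_imp_consistent)
  show "set P \<subseteq> range arc" using arcs_P unfolding arcs_def by auto
next
  fix k p q r k'
  assume k: "k < length P" "P ! k = arc (p, q, r)" "distinct [p, q, r]" "k' \<le> k"
  obtain p' q' r' where "(p', q', r') \<in> triple_set n m cls" "P ! k = arc (p', q', r')"
    using triple_at[OF k(1)] .
  moreover from this(2) have "r = r'" using arc_eq_imp_outgroup_eq[OF k(3)] k(2) by simp
  ultimately show "r \<notin> tail k'" using outgroup_not_in_earlier_tail[OF k(1) _ _ k(4)] by simp
qed

end

theorem lemma2: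
  fixes n m :: nat and cls :: "nat \<Rightarrow> (nat \<times> bool) set" and P :: "leaf hyperarc list"
  assumes "n \<ge> 1" and "m \<ge> 1"
    and "\<forall>j\<in>{1..m}. finite (cls j) \<and> card (cls j) \<in> {2, 3} \<and> (\<forall>(i, s)\<in>cls j. i \<in> {1..n})"
    and "set P \<subseteq> arcs n m cls"
    and "is_path P {Alpha, Beta} {C (m+1), Gamma}"
    and "acyclic_path P"
  shows "consistent (triples_of (set P))"
proof -
  interpret reduction_path n m cls P
    using assms(4-6) by unfold_locales
  show ?thesis by (rule consistent_triples_of_path)
qed

end
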